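(* Let $1<S\le N$, $L$ a band-width vector, $\dot W$ an $L$-admissible matrix, $W_\varepsilon=\mathrm{Id}+\varepsilon\dot W$, $k\in\mathbb N$, $\beta\in\Gamma$, and $P_{\varepsilon,\beta}=D_{k,\beta,L}W_\varepsilon$. Let $\gamma>0$ be such that $P_{\varepsilon,\beta}$ has $N$ distinct eigenvalues for $0<\varepsilon<\gamma$, and for such $\varepsilon$ let $f^{(1)}_\varepsilon,\dots,f^{(N)}_\varepsilon$ be a unit-norm eigenbasis with eigenvalues $\lambda^{(\ell)}_\varepsilon$, labelled so that $\lambda^{(\ell)}_\varepsilon\to e^{-2\pi ik\beta_s}$ as $\varepsilon\to0$ whenever $\ell\in B_s$. Then for every $1\le\ell\ne m\le N$, $\lim_{\varepsilon\to0}\langle f^{(\ell)}_\varepsilon,f^{(m)}_\varepsilon\rangle=0$.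
   Context: A band-width vector is $L=(L_1,\dots,L_S)$ of positive integers with $\sum_sL_s=N$; $N_0=0$, $N_s=N_{s-1}+L_s$, $B_s=\{j:N_{s-1}<j\le N_s\}$. $D_{k,\beta,L}$ is the diagonal matrix with $j$-th entry $e^{-2\pi ik\beta_s}$ for $j\in B_s$. $\dot W$ is $L$-admissible if it is real symmetric and (1) $\dot W_{ij}\ge0$ for $i\ne j$, $\sum_j\dot W_{ij}=0$ for all $i$; (2) $\dot W$ has $N$ distinct eigenvalues; (3) each $\hat W_s=(\dot W_{jk})_{j,k\in B_s}$ has $L_s$ distinct eigenvalues. $\Gamma=\{\beta\in\mathbb R^S: e^{-2\pi ik\beta_{s_1}}\neq e^{-2\pi ik\beta_{s_2}}\text{ for all }k\ne0,\ s_1\ne s_2\}$. $\langle v,w\rangle=\sum_jv_j\overline{w_j}$. *)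

theory Defs
  imports "HOL-Analysis.Analysis" "Jordan_Normal_Form.Char_Poly"
begin

(* Band-width vector L = [L_1,...,L_S] (a list, 0-based blocks s < S).
   N_s = L_1 + ... + L_s  (so N_0 = 0), block B_s = {j. N_{s-1} <= j < N_s}
   in 0-based matrix indices (paper's j in 1..N corresponds to j-1 here). *)

definition bw_vector :: "nat list \<Rightarrow> bool" where
  "bw_vector L \<longleftrightarrow> (\<forall>s<length L. 0 < L ! s)"

definition bwN :: "nat list \<Rightarrow> nat \<Rightarrow> nat" where
  "bwN L s = sum_list (take s L)"

definition block :: "nat list \<Rightarrow> nat \<Rightarrow> nat set" where
  "block L s = {j. bwN L s \<le> j \<and> j < bwN L (Suc s)}"

definition Dmat :: "nat \<Rightarrow> (nat \<Rightarrow> real) \<Rightarrow> nat list \<Rightarrow> complex mat" where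
  "Dmat k \<beta> L = mat (sum_list L) (sum_list L) (\<lambda>(i,j).
      if i = j then (\<Sum>s<length L. if i \<in> block L s
           then cis (- 2 * pi * real k * \<beta> s) else 0) else 0)"

definition diag_block :: "'a mat \<Rightarrow> nat list \<Rightarrow> nat \<Rightarrow> 'a mat" where
  "diag_block W L s = mat (L ! s) (L ! s) (\<lambda>(i,j). W $$ (bwN L s + i, bwN L s + j))"

definition L_admissible :: "nat list \<Rightarrow> real mat \<Rightarrow> bool" where
  "L_admissible L W \<longleftrightarrow>
     (let N = sum_list L in
      W \<in> carrier_mat N N \<and> transpose_mat W = W \<and>
      (\<forall>i<N. \<forall>j<N. i \<noteq> j \<longrightarrow> W $$ (i,j) \<ge> 0) \<and>
      (\<forall>i<N. (\<Sum>j<N. W $$ (i,j)) = 0) \<and>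
      card {x. eigenvalue W x} = N \<and>
      (\<forall>s<length L. card {x. eigenvalue (diag_block W L s) x} = L ! s))"

definition Gamma :: "nat \<Rightarrow> (nat \<Rightarrow> real) set" where
  "Gamma S = {\<beta>. \<forall>k::int. \<forall>s1<S. \<forall>s2<S. k \<noteq> 0 \<and> s1 \<noteq> s2 \<longrightarrow>
      cis (- 2 * pi * real_of_int k * \<beta> s1) \<noteq> cis (- 2 * pi * real_of_int k * \<beta> s2)}"

definition cinner :: "complex vec \<Rightarrow> complex vec \<Rightarrow> complex" where
  "cinner v w = (\<Sum>j<dim_vec v. v $ j * cnj (w $ j))"

definition cvnorm :: "complex vec \<Rightarrow> real" where
  "cvnorm v = sqrt (\<Sum>j<dim_vec v. (cmod (v $ j))\<^sup>2)"

end

theory Submission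
  imports Defs
begin

(* Write P(eps) = D (I + eps W) with D = diag(d_i).  Componentwise the eigen-equation reads
   (lambda_l - d_i) f_l(i) = eps d_i (W f_l)(i), so as eps -> 0 the unit eigenvector f_l
   concentrates on the level set B = {i. d_i = d_l}; this settles the case d_l ~= d_m.
   If d_l = d_m = c, write lambda_j = c (1 + eps z_j).  On B the eigen-equation says
   (W f_l)(i) = z_l f_l(i), and the symmetry of W yields
   (z_l - conj z_m) * sum_{i in B} f_l(i) conj f_m(i) -> 0.
   The rescaled eigenvalues z_j (j in B) stay bounded, and a determinant computation shows
   that every cluster point of (z_j)_{j in B} enumerates the |B| distinct real eigenvalues of
   the principal block W_B.  Hence z_l - conj z_m stays away from 0. *)

no_notation Finite_Cartesian_Product.vec_nth (infixl "$" 90)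

section \<open>Determinants, characteristic polynomials and limits\<close>

lemma det_scale_rows:
  fixes A M :: "'a::comm_ring_1 mat"
  assumes A: "A \<in> carrier_mat n n" and M: "M \<in> carrier_mat n n"
    and rows: "\<And>i j. i < n \<Longrightarrow> j < n \<Longrightarrow> A $$ (i,j) = s i * M $$ (i,j)"
  shows "det A = (\<Prod>i<n. s i) * det M"
proof -
  have "signof p * (\<Prod>i=0..<n. A $$ (i, p i)) = (\<Prod>i<n. s i) * (signof p * (\<Prod>i=0..<n. M $$ (i, p i)))"
    if "p permutes {0..<n}" for p
  proof -
    have "(\<Prod>i=0..<n. A $$ (i, p i)) = (\<Prod>i=0..<n. s i * M $$ (i, p i))"
      using that permutes_in_image by (intro prod.cong refl rows) fastforce+
    then show ?thesis
      by (simp add: prod.distrib atLeast0LessThan algebra_simps)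
  qed
  then show ?thesis
    by (simp add: det_def'[OF A] det_def'[OF M] sum_distrib_left)
qed

lemma tendsto_det:
  fixes M :: "'b \<Rightarrow> 'a::real_normed_field mat"
  assumes M: "\<And>x. M x \<in> carrier_mat n n" and M0: "M0 \<in> carrier_mat n n"
    and lim: "\<And>i j. i < n \<Longrightarrow> j < n \<Longrightarrow> ((\<lambda>x. M x $$ (i,j)) \<longlongrightarrow> M0 $$ (i,j)) F"
  shows "((\<lambda>x. det (M x)) \<longlongrightarrow> det M0) F"
  unfolding det_def'[OF M] det_def'[OF M0]
proof (intro tendsto_sum tendsto_mult tendsto_const tendsto_prod)
  fix p i assume "p \<in> {p. p permutes {0..<n}}" "i \<in> {0..<n}"
  then show "((\<lambda>x. M x $$ (i, p i)) \<longlongrightarrow> M0 $$ (i, p i)) F"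
    using lim permutes_in_image by fastforce
qed

lemma poly_char_poly_eq_prod:
  fixes A :: "complex mat" and g :: "nat \<Rightarrow> complex"
  assumes A: "A \<in> carrier_mat n n" and card: "card {x. eigenvalue A x} = n"
    and inj: "inj_on g {..<n}" and ev: "\<And>j. j < n \<Longrightarrow> eigenvalue A (g j)"
  shows "poly (char_poly A) y = (\<Prod>j<n. y - g j)"
proof -
  obtain as where cp: "char_poly A = (\<Prod>a\<leftarrow>as. [:- a, 1:])" and len: "length as = n"
    using char_poly_factorized[OF A] by blast
  have poly_cp: "poly (char_poly A) y = (\<Prod>a\<leftarrow>as. y - a)" for y
    unfolding cp by (induct as) (auto simp: algebra_simps)
  have "eigenvalue A x \<longleftrightarrow> x \<in> set as" for x
    unfolding eigenvalue_root_char_poly[OF A] poly_cp by (induct as) auto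
  then have roots: "{x. eigenvalue A x} = set as"
    by auto
  have "distinct as"
    using card len roots by (metis card_distinct)
  then have "poly (char_poly A) y = (\<Prod>a\<in>set as. y - a)"
    unfolding poly_cp by (simp add: prod.distinct_set_conv_list)
  also have "set as = g ` {..<n}"
    using ev roots card_image[OF inj] card by (intro card_subset_eq[symmetric]) auto
  finally show ?thesis
    by (simp add: prod.reindex[OF inj])
qed

lemma bounded_family_convergent_subseq:
  fixes x :: "'i \<Rightarrow> nat \<Rightarrow> 'a::heine_borel"
  assumes "finite J" and "\<And>j. j \<in> J \<Longrightarrow> bounded (range (x j))"
  shows "\<exists>r. strict_mono r \<and> (\<forall>j\<in>J. \<exists>a. (\<lambda>n. x j (r n)) \<longlonglongrightarrow> a)"
  using assms
proof (induct J rule: finite_induct)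
  case empty
  then show ?case by (intro exI[of _ id]) (auto simp: strict_mono_def)
next
  case (insert i J)
  then obtain r where r: "strict_mono r" and conv: "\<forall>j\<in>J. \<exists>a. (\<lambda>n. x j (r n)) \<longlonglongrightarrow> a"
    by auto
  have "bounded (range (\<lambda>n. x i (r n)))"
    using insert(4)[of i] by (rule bounded_subset) auto
  then obtain a r' where r': "strict_mono r'" and a: "((\<lambda>n. x i (r n)) \<circ> r') \<longlonglongrightarrow> a"
    using bounded_imp_convergent_subsequence by blast
  have "\<exists>a. (\<lambda>n. x j (r (r' n))) \<longlonglongrightarrow> a" if "j \<in> J" for j
    using conv that LIMSEQ_subseq_LIMSEQ[OF _ r'] by (fastforce simp: o_def)
  with a have "\<forall>j\<in>insert i J. \<exists>a. (\<lambda>n. x j ((r \<circ> r') n)) \<longlonglongrightarrow> a"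
    by (auto simp: o_def)
  with r r' show ?case
    by (blast intro: strict_mono_o)
qed

lemma tendsto_mult_Bfun_zero:
  fixes a b :: "'b \<Rightarrow> 'a::real_normed_algebra"
  assumes "(a \<longlongrightarrow> 0) F" and "Bfun b F"
  shows "((\<lambda>x. a x * b x) \<longlongrightarrow> 0) F"
  using bounded_bilinear.Zfun_prod_Bfun[OF bounded_bilinear_mult, of a F b] assms
  by (simp add: tendsto_Zfun_iff)

lemma null_sequence_if_not_bounded_away:
  fixes g :: "real \<Rightarrow> real"
  assumes not_away: "\<not> (\<exists>\<delta>>0. \<forall>\<^sub>F x in at_right 0. \<delta> \<le> g x)"
    and nonneg: "\<And>x. 0 \<le> g x" and Q: "\<forall>\<^sub>F x in at_right 0. Q x"
  obtains e where "filterlim e (at_right 0) sequentially" and "(\<lambda>n. g (e n)) \<longlonglongrightarrow> 0"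
    and "\<And>n. Q (e n)"
proof -
  have "\<exists>x. x \<in> {0<..<inverse (Suc n)} \<and> g x < inverse (Suc n) \<and> Q x" for n :: nat
  proof -
    have "inverse (real (Suc n)) > 0"
      by simp
    then have "\<not> (\<forall>\<^sub>F x in at_right 0. inverse (Suc n) \<le> g x)"
      using not_away by blast
    then have "\<exists>\<^sub>F x in at_right 0. g x < inverse (Suc n)"
      by (simp add: not_eventually not_le)
    moreover have "\<forall>\<^sub>F x in at_right 0. x \<in> {0<..<inverse (Suc n)}"
      by (intro eventually_at_rightI[of 0 "inverse (Suc n)"]) auto
    then have "\<forall>\<^sub>F x in at_right 0. x \<in> {0<..<inverse (Suc n)} \<and> Q x"
      using Q by (rule eventually_conj)
    ultimately have "\<exists>\<^sub>F x in at_right 0. (x \<in> {0<..<inverse (Suc n)} \<and> Q x) \<and> g x < inverse (Suc n)"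
      by (rule frequently_eventually_conj)
    then show ?thesis
      by (auto dest: frequently_ex)
  qed
  then obtain e where e: "\<And>n. e n \<in> {0<..<inverse (Suc n)} \<and> g (e n) < inverse (Suc n) \<and> Q (e n)"
    by metis
  show thesis
  proof (rule that)
    show "filterlim e (at_right 0) sequentially"
    proof (rule tendsto_imp_filterlim_at_right)
      show "e \<longlonglongrightarrow> 0"
        using e by (intro real_tendsto_sandwich[OF _ _ tendsto_const LIMSEQ_inverse_real_of_nat])
          (auto intro!: always_eventually less_imp_le)
    qed (use e in \<open>auto intro!: always_eventually\<close>)
    show "(\<lambda>n. g (e n)) \<longlonglongrightarrow> 0"
      using e nonneg by (intro real_tendsto_sandwich[OF _ _ tendsto_const LIMSEQ_inverse_real_of_nat])
        (auto intro!: always_eventually less_imp_le)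
  qed (use e in blast)
qed

definition principal_submatrix_eigenvalue :: "(nat \<Rightarrow> nat \<Rightarrow> real) \<Rightarrow> nat set \<Rightarrow> real \<Rightarrow> bool" where
  "principal_submatrix_eigenvalue W B x \<longleftrightarrow>
     (\<exists>v. (\<exists>i\<in>B. v i \<noteq> 0) \<and> (\<forall>i\<in>B. (\<Sum>j\<in>B. W i j * v j) = x * v i))"

section \<open>Band structure\<close>

lemma bwN_Suc: "s < length L \<Longrightarrow> bwN L (Suc s) = bwN L s + L ! s"
  by (simp add: bwN_def take_Suc_conv_app_nth)

lemma bwN_mono: "a \<le> b \<Longrightarrow> bwN L a \<le> bwN L b"
  by (metis bwN_def le_iff_add take_add sum_list_append le_add1)

lemma block_exists:
  assumes "j < sum_list L"
  shows "\<exists>s<length L. j \<in> block L s"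
proof -
  have ex: "j < bwN L (length L)"
    using assms by (simp add: bwN_def)
  define s where "s = (LEAST s. j < bwN L (Suc s))"
  have len: "length L > 0"
    using assms by (cases L) auto
  with ex have ex': "j < bwN L (Suc (length L - 1))"
    by simp
  have "j < bwN L (Suc s)"
    unfolding s_def by (rule LeastI[where P = "\<lambda>s. j < bwN L (Suc s)", OF ex'])
  moreover have "s < length L"
    using Least_le[where P = "\<lambda>s. j < bwN L (Suc s)", OF ex'] len unfolding s_def by linarith
  moreover have "bwN L s \<le> j"
  proof (cases s)
    case (Suc s')
    then show ?thesis
      using not_less_Least[of s' "\<lambda>s. j < bwN L (Suc s)"] by (auto simp: s_def)
  qed (simp add: bwN_def)
  ultimately show ?thesis
    by (auto simp: block_def)
qed

lemma block_unique: "j \<in> block L s1 \<Longrightarrow> j \<in> block L s2 \<Longrightarrow> s1 = s2"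
  using bwN_mono[of "Suc s1" s2 L] bwN_mono[of "Suc s2" s1 L]
  by (cases s1 s2 rule: linorder_cases) (auto simp: block_def)

lemma block_lt: "s < length L \<Longrightarrow> j \<in> block L s \<Longrightarrow> j < sum_list L"
  using bwN_mono[of "Suc s" "length L" L] by (auto simp: block_def bwN_def)

lemma block_eq_image:
  assumes "s < length L"
  shows "block L s = (\<lambda>t. bwN L s + t) ` {..<L ! s}"
proof
  show "block L s \<subseteq> (\<lambda>t. bwN L s + t) ` {..<L ! s}"
  proof
    fix j assume "j \<in> block L s"
    then show "j \<in> (\<lambda>t. bwN L s + t) ` {..<L ! s}"
      using assms by (intro image_eqI[of _ _ "j - bwN L s"]) (auto simp: block_def bwN_Suc)
  qed
qed (use assms in \<open>auto simp: block_def bwN_Suc\<close>)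

lemma card_block: "s < length L \<Longrightarrow> card (block L s) = L ! s"
  by (simp add: block_eq_image card_image)

lemma diag_block_mult_vec:
  fixes A :: "'a::comm_semiring_0 mat"
  assumes s: "s < length L" and t: "t < L ! s"
  shows "(diag_block A L s *\<^sub>v vec (L ! s) g) $ t
       = (\<Sum>j\<in>block L s. A $$ (bwN L s + t, j) * g (j - bwN L s))"
proof -
  have "(diag_block A L s *\<^sub>v vec (L ! s) g) $ t = (\<Sum>u<L ! s. A $$ (bwN L s + t, bwN L s + u) * g u)"
    using t by (simp add: diag_block_def scalar_prod_def atLeast0LessThan)
  also have "\<dots> = (\<Sum>j\<in>block L s. A $$ (bwN L s + t, j) * g (j - bwN L s))"
    unfolding block_eq_image[OF s] by (subst sum.reindex) auto
  finally show ?thesis .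
qed

lemma principal_submatrix_eigenvalue_block_iff:
  fixes A :: "real mat"
  assumes s: "s < length L"
  shows "principal_submatrix_eigenvalue (\<lambda>i j. A $$ (i,j)) (block L s) x \<longleftrightarrow> eigenvalue (diag_block A L s) x"
proof
  assume "principal_submatrix_eigenvalue (\<lambda>i j. A $$ (i,j)) (block L s) x"
  then obtain v i0 where i0: "i0 \<in> block L s" "v i0 \<noteq> 0"
    and ev: "\<And>i. i \<in> block L s \<Longrightarrow> (\<Sum>j\<in>block L s. A $$ (i,j) * v j) = x * v i"
    unfolding principal_submatrix_eigenvalue_def by blast
  define u where "u = vec (L ! s) (\<lambda>t. v (bwN L s + t))"
  have ev_u: "diag_block A L s *\<^sub>v u = x \<cdot>\<^sub>v u"
  proof (rule eq_vecI)
    fix t assume "t < dim_vec (x \<cdot>\<^sub>v u)"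
    then have t: "t < L ! s" by (simp add: u_def)
    then have "bwN L s + t \<in> block L s"
      using block_eq_image[OF s] by auto
    moreover have "(\<Sum>j\<in>block L s. A $$ (bwN L s + t, j) * v (bwN L s + (j - bwN L s)))
        = (\<Sum>j\<in>block L s. A $$ (bwN L s + t, j) * v j)"
      by (intro sum.cong) (auto simp: block_def)
    ultimately show "(diag_block A L s *\<^sub>v u) $ t = (x \<cdot>\<^sub>v u) $ t"
      using ev t unfolding u_def diag_block_mult_vec[OF s t] by simp
  qed (simp add: diag_block_def u_def)
  obtain t0 where "t0 < L ! s" "i0 = bwN L s + t0"
    using i0 block_eq_image[OF s] by auto
  then have "u \<noteq> 0\<^sub>v (L ! s)"
    using i0 by (auto simp: u_def dest!: arg_cong[of _ _ "\<lambda>w. w $ t0"])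
  with ev_u show "eigenvalue (diag_block A L s) x"
    unfolding eigenvalue_def eigenvector_def by (intro exI[of _ u]) (simp add: diag_block_def u_def)
next
  assume "eigenvalue (diag_block A L s) x"
  then obtain u where u: "u \<in> carrier_vec (L ! s)" "u \<noteq> 0\<^sub>v (L ! s)"
    and ev: "diag_block A L s *\<^sub>v u = x \<cdot>\<^sub>v u"
    unfolding eigenvalue_def eigenvector_def by (auto simp: diag_block_def)
  have u_vec: "vec (L ! s) (\<lambda>t. u $ t) = u"
    using u(1) by auto
  obtain t0 where t0: "t0 < L ! s" "u $ t0 \<noteq> 0"
    using u by (metis carrier_vecD eq_vecI index_zero_vec)
  have "(\<Sum>j\<in>block L s. A $$ (i,j) * u $ (j - bwN L s)) = x * u $ (i - bwN L s)"
    if i: "i \<in> block L s" for i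
  proof -
    obtain t where t: "t < L ! s" "i = bwN L s + t"
      using i block_eq_image[OF s] by auto
    then show ?thesis
      using diag_block_mult_vec[OF s t(1), of A "\<lambda>t. u $ t"] ev u(1) by (simp add: u_vec)
  qed
  moreover have "bwN L s + t0 \<in> block L s"
    using t0 block_eq_image[OF s] by auto
  ultimately show "principal_submatrix_eigenvalue (\<lambda>i j. A $$ (i,j)) (block L s) x"
    unfolding principal_submatrix_eigenvalue_def using t0 by (intro exI[of _ "\<lambda>j. u $ (j - bwN L s)"]) force
qed

lemma Dmat_diag_entry:
  assumes "s < length L" "i \<in> block L s"
  shows "Dmat k \<beta> L $$ (i,i) = cis (- 2 * pi * real k * \<beta> s)"
proof -
  have "(\<Sum>s'<length L. if i \<in> block L s' then cis (- 2 * pi * real k * \<beta> s') else 0)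
      = (\<Sum>s'<length L. if s' = s then cis (- 2 * pi * real k * \<beta> s') else 0)"
    using assms block_unique by (intro sum.cong) auto
  then show ?thesis
    using assms block_lt by (simp add: Dmat_def)
qed

lemma Dmat_mult:
  assumes X: "X \<in> carrier_mat (sum_list L) (sum_list L)"
  shows "Dmat k \<beta> L * X = mat (sum_list L) (sum_list L) (\<lambda>(i,j). Dmat k \<beta> L $$ (i,i) * X $$ (i,j))"
proof (rule eq_matI)
  fix i j assume "i < dim_row (mat (sum_list L) (sum_list L) (\<lambda>(i,j). Dmat k \<beta> L $$ (i,i) * X $$ (i,j)))"
    "j < dim_col (mat (sum_list L) (sum_list L) (\<lambda>(i,j). Dmat k \<beta> L $$ (i,i) * X $$ (i,j)))"
  then have i: "i < sum_list L" and j: "j < sum_list L" by auto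
  have "(Dmat k \<beta> L * X) $$ (i,j) = (\<Sum>t<sum_list L. Dmat k \<beta> L $$ (i,t) * X $$ (t,j))"
    using i j X by (simp add: Dmat_def scalar_prod_def atLeast0LessThan)
  also have "\<dots> = (\<Sum>t<sum_list L. if t = i then Dmat k \<beta> L $$ (i,i) * X $$ (i,j) else 0)"
    using i by (intro sum.cong) (auto simp: Dmat_def)
  finally show "(Dmat k \<beta> L * X) $$ (i,j)
      = mat (sum_list L) (sum_list L) (\<lambda>(i,j). Dmat k \<beta> L $$ (i,i) * X $$ (i,j)) $$ (i,j)"
    using i j by simp
qed (use X in \<open>auto simp: Dmat_def\<close>)

lemma Dmat_mult_perturbation:
  fixes Wd :: "real mat"
  assumes Wd: "Wd \<in> carrier_mat (sum_list L) (sum_list L)"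
  shows "Dmat k \<beta> L * (1\<^sub>m (sum_list L) + complex_of_real \<epsilon> \<cdot>\<^sub>m map_mat complex_of_real Wd)
       = mat (sum_list L) (sum_list L) (\<lambda>(i,j). Dmat k \<beta> L $$ (i,i) *
           ((if i = j then 1 else 0) + of_real \<epsilon> * of_real (Wd $$ (i,j))))"
  using Dmat_mult[of "1\<^sub>m (sum_list L) + complex_of_real \<epsilon> \<cdot>\<^sub>m map_mat complex_of_real Wd"] Wd
  by (intro eq_matI) auto

lemma Dmat_level_set:
  assumes \<beta>: "\<beta> \<in> Gamma (length L)" and k: "0 < k" and s: "s < length L" "i \<in> block L s"
  shows "{j. j < sum_list L \<and> Dmat k \<beta> L $$ (j,j) = Dmat k \<beta> L $$ (i,i)} = block L s"
proof -
  have "\<forall>s1<length L. \<forall>s2<length L. int k \<noteq> 0 \<and> s1 \<noteq> s2 \<longrightarrow>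
      cis (- 2 * pi * real_of_int (int k) * \<beta> s1) \<noteq> cis (- 2 * pi * real_of_int (int k) * \<beta> s2)"
    using \<beta> unfolding Gamma_def by blast
  then have "Dmat k \<beta> L $$ (j,j) = Dmat k \<beta> L $$ (i,i) \<longleftrightarrow> s' = s"
    if "s' < length L" "j \<in> block L s'" for j s'
    using k s that by (auto simp: Dmat_diag_entry)
  then show ?thesis
    using s block_exists block_lt by blast
qed

lemma L_admissible_symmetric:
  "L_admissible L Wd \<Longrightarrow> i < sum_list L \<Longrightarrow> j < sum_list L \<Longrightarrow> Wd $$ (i,j) = Wd $$ (j,i)"
  unfolding L_admissible_def Let_def by (metis carrier_matD index_transpose_mat(1))

lemma L_admissible_block_spectrum:
  "L_admissible L Wd \<Longrightarrow> s < length L \<Longrightarrow>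
     card {x. principal_submatrix_eigenvalue (\<lambda>i j. Wd $$ (i,j)) (block L s) x} = card (block L s)"
  by (simp add: L_admissible_def Let_def principal_submatrix_eigenvalue_block_iff card_block)

section \<open>Eigenvectors of a perturbed diagonal matrix\<close>

locale perturbed_diagonal =
  fixes N :: nat and d :: "nat \<Rightarrow> complex" and W :: "nat \<Rightarrow> nat \<Rightarrow> real"
    and P :: "real \<Rightarrow> complex mat" and \<gamma> :: real
    and f :: "real \<Rightarrow> nat \<Rightarrow> complex vec" and lam :: "real \<Rightarrow> nat \<Rightarrow> complex"
  assumes P_eq: "\<And>\<epsilon>. P \<epsilon> = mat N N (\<lambda>(i,j). d i * ((if i = j then 1 else 0) + of_real \<epsilon> * of_real (W i j)))"
    and W_sym: "\<And>i j. i < N \<Longrightarrow> j < N \<Longrightarrow> W i j = W j i"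
    and gamma_pos: "0 < \<gamma>"
    and card_eigenvalues: "\<And>\<epsilon>. 0 < \<epsilon> \<Longrightarrow> \<epsilon> < \<gamma> \<Longrightarrow> card {x. eigenvalue (P \<epsilon>) x} = N"
    and eigenpair: "\<And>\<epsilon> l. 0 < \<epsilon> \<Longrightarrow> \<epsilon> < \<gamma> \<Longrightarrow> l < N \<Longrightarrow>
           f \<epsilon> l \<in> carrier_vec N \<and> cvnorm (f \<epsilon> l) = 1 \<and> P \<epsilon> *\<^sub>v f \<epsilon> l = lam \<epsilon> l \<cdot>\<^sub>v f \<epsilon> l"
    and lam_inj: "\<And>\<epsilon>. 0 < \<epsilon> \<Longrightarrow> \<epsilon> < \<gamma> \<Longrightarrow> inj_on (lam \<epsilon>) {..<N}"
    and lam_tendsto: "\<And>l. l < N \<Longrightarrow> ((\<lambda>\<epsilon>. lam \<epsilon> l) \<longlongrightarrow> d l) (at_right 0)"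
begin

definition Wf :: "real \<Rightarrow> nat \<Rightarrow> nat \<Rightarrow> complex" where
  "Wf \<epsilon> l i = (\<Sum>j<N. of_real (W i j) * f \<epsilon> l $ j)"

definition W_abs_sum :: real where
  "W_abs_sum = (\<Sum>i<N. \<Sum>j<N. \<bar>W i j\<bar>)"

lemma eventually_in_range: "\<forall>\<^sub>F \<epsilon> in at_right 0. 0 < \<epsilon> \<and> \<epsilon> < \<gamma>"
  using gamma_pos by (intro eventually_at_rightI[of 0 \<gamma>]) auto

lemma P_carrier: "P \<epsilon> \<in> carrier_mat N N"
  by (simp add: P_eq)

lemma eigen_equation:
  assumes "0 < \<epsilon>" "\<epsilon> < \<gamma>" "l < N" "i < N"
  shows "d i * (f \<epsilon> l $ i + of_real \<epsilon> * Wf \<epsilon> l i) = lam \<epsilon> l * f \<epsilon> l $ i"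
proof -
  have fc: "f \<epsilon> l \<in> carrier_vec N" and ev: "P \<epsilon> *\<^sub>v f \<epsilon> l = lam \<epsilon> l \<cdot>\<^sub>v f \<epsilon> l"
    using eigenpair[OF assms(1-3)] by auto
  have "(P \<epsilon> *\<^sub>v f \<epsilon> l) $ i
      = (\<Sum>j<N. d i * ((if i = j then 1 else 0) + of_real \<epsilon> * of_real (W i j)) * f \<epsilon> l $ j)"
    using fc assms(4) by (simp add: P_eq scalar_prod_def atLeast0LessThan)
  also have "\<dots> = (\<Sum>j<N. (if i = j then d i * f \<epsilon> l $ j else 0))
      + (\<Sum>j<N. d i * (of_real \<epsilon> * (of_real (W i j) * f \<epsilon> l $ j)))"
    by (subst sum.distrib[symmetric], rule sum.cong) (auto simp: algebra_simps)
  also have "\<dots> = d i * (f \<epsilon> l $ i + of_real \<epsilon> * Wf \<epsilon> l i)"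
    using assms(4) by (simp add: Wf_def sum_distrib_left algebra_simps)
  finally show ?thesis
    using ev fc assms(4) by simp
qed

lemma sum_norm_squares:
  assumes "0 < \<epsilon>" "\<epsilon> < \<gamma>" "l < N"
  shows "(\<Sum>j<N. (cmod (f \<epsilon> l $ j))\<^sup>2) = 1"
  using eigenpair[OF assms] unfolding cvnorm_def by (metis carrier_vecD real_sqrt_eq_1_iff)

lemma norm_component_le_1:
  assumes "0 < \<epsilon>" "\<epsilon> < \<gamma>" "l < N" "i < N"
  shows "cmod (f \<epsilon> l $ i) \<le> 1"
proof -
  have "(cmod (f \<epsilon> l $ i))\<^sup>2 \<le> (\<Sum>j<N. (cmod (f \<epsilon> l $ j))\<^sup>2)"
    using assms(4) by (intro member_le_sum) auto
  then show ?thesis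
    using sum_norm_squares[OF assms(1-3)] by (simp add: power_le_one_iff abs_le_square_iff)
qed

lemma norm_Wf_le:
  assumes "0 < \<epsilon>" "\<epsilon> < \<gamma>" "l < N" "i < N"
  shows "cmod (Wf \<epsilon> l i) \<le> W_abs_sum"
proof -
  have "cmod (Wf \<epsilon> l i) \<le> (\<Sum>j<N. \<bar>W i j\<bar> * cmod (f \<epsilon> l $ j))"
    unfolding Wf_def by (rule order_trans[OF norm_sum]) (simp add: norm_mult)
  also have "\<dots> \<le> (\<Sum>j<N. \<bar>W i j\<bar>)"
    using norm_component_le_1[OF assms(1-3)] by (intro sum_mono mult_right_le_one_le) auto
  also have "\<dots> \<le> W_abs_sum"
    unfolding W_abs_sum_def using assms(4)
    by (intro member_le_sum[where f = "\<lambda>i. \<Sum>j<N. \<bar>W i j\<bar>"]) (auto intro: sum_nonneg)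
  finally show ?thesis .
qed

lemma Bfun_component: "l < N \<Longrightarrow> i < N \<Longrightarrow> Bfun (\<lambda>\<epsilon>. f \<epsilon> l $ i) (at_right 0)"
  using eventually_in_range by (intro BfunI) (auto elim!: eventually_mono intro: norm_component_le_1)

lemma Bfun_Wf: "l < N \<Longrightarrow> i < N \<Longrightarrow> Bfun (\<lambda>\<epsilon>. Wf \<epsilon> l i) (at_right 0)"
  using eventually_in_range by (intro BfunI) (auto elim!: eventually_mono intro: norm_Wf_le)

lemma component_tendsto_zero:
  assumes l: "l < N" and i: "i < N" and "d i \<noteq> d l"
  shows "((\<lambda>\<epsilon>. f \<epsilon> l $ i) \<longlongrightarrow> 0) (at_right 0)"
proof -
  have "((\<lambda>\<epsilon>. of_real \<epsilon> * d i / (lam \<epsilon> l - d i)) \<longlongrightarrow> of_real 0 * d i / (d l - d i)) (at_right 0)"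
    using assms by (intro tendsto_intros lam_tendsto) auto
  then have "((\<lambda>\<epsilon>. of_real \<epsilon> * d i / (lam \<epsilon> l - d i) * Wf \<epsilon> l i) \<longlongrightarrow> 0) (at_right 0)"
    using Bfun_Wf[OF l i] by (intro tendsto_mult_Bfun_zero) auto
  moreover have "\<forall>\<^sub>F \<epsilon> in at_right 0. lam \<epsilon> l \<noteq> d i"
    using tendsto_imp_eventually_ne[OF lam_tendsto[OF l]] assms(3) by auto
  then have "\<forall>\<^sub>F \<epsilon> in at_right 0. of_real \<epsilon> * d i / (lam \<epsilon> l - d i) * Wf \<epsilon> l i = f \<epsilon> l $ i"
    using eventually_in_range
  proof eventually_elim
    case (elim \<epsilon>)
    then show ?case
      using eigen_equation[of \<epsilon> l i] l i by (auto simp: field_simps)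
  qed
  ultimately show ?thesis
    by (rule Lim_transform_eventually)
qed

lemma cinner_eq_sum:
  "0 < \<epsilon> \<Longrightarrow> \<epsilon> < \<gamma> \<Longrightarrow> l < N \<Longrightarrow> cinner (f \<epsilon> l) (f \<epsilon> m) = (\<Sum>i<N. f \<epsilon> l $ i * cnj (f \<epsilon> m $ i))"
  using eigenpair unfolding cinner_def by (metis carrier_vecD)

lemma cinner_tendsto_zero_distinct_limits:
  assumes l: "l < N" and m: "m < N" and "d l \<noteq> d m"
  shows "((\<lambda>\<epsilon>. cinner (f \<epsilon> l) (f \<epsilon> m)) \<longlongrightarrow> 0) (at_right 0)"
proof -
  have "((\<lambda>\<epsilon>. f \<epsilon> l $ i * cnj (f \<epsilon> m $ i)) \<longlongrightarrow> 0) (at_right 0)" if i: "i < N" for i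
  proof (cases "d i = d l")
    case True
    then have "((\<lambda>\<epsilon>. cnj (f \<epsilon> m $ i)) \<longlongrightarrow> 0) (at_right 0)"
      using tendsto_cnj[OF component_tendsto_zero[OF m i]] assms(3) by simp
    then show ?thesis
      using Bfun_component[OF l i] tendsto_mult_Bfun_zero by (subst mult.commute) blast
  next
    case False
    have "Bfun (\<lambda>\<epsilon>. cnj (f \<epsilon> m $ i)) (at_right 0)"
      using Bfun_component[OF m i] by (simp add: Bfun_def)
    then show ?thesis
      using component_tendsto_zero[OF l i False] tendsto_mult_Bfun_zero by blast
  qed
  then have "((\<lambda>\<epsilon>. \<Sum>i<N. f \<epsilon> l $ i * cnj (f \<epsilon> m $ i)) \<longlongrightarrow> 0) (at_right 0)"
    by (intro tendsto_null_sum) auto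
  then show ?thesis
    by (rule Lim_transform_eventually) (use eventually_in_range cinner_eq_sum l in \<open>auto elim: eventually_mono\<close>)
qed

lemma sum_Wf_cnj_symmetric:
  "(\<Sum>i<N. Wf \<epsilon> l i * cnj (f \<epsilon> m $ i)) = (\<Sum>i<N. f \<epsilon> l $ i * cnj (Wf \<epsilon> m i))"
proof -
  have "(\<Sum>i<N. f \<epsilon> l $ i * cnj (Wf \<epsilon> m i)) = (\<Sum>i<N. \<Sum>j<N. f \<epsilon> l $ i * of_real (W i j) * cnj (f \<epsilon> m $ j))"
    by (simp add: Wf_def sum_distrib_left mult.assoc)
  also have "\<dots> = (\<Sum>j<N. \<Sum>i<N. of_real (W j i) * f \<epsilon> l $ i * cnj (f \<epsilon> m $ j))"
    by (subst sum.swap) (simp add: W_sym mult.commute)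
  also have "\<dots> = (\<Sum>i<N. Wf \<epsilon> l i * cnj (f \<epsilon> m $ i))"
    by (simp add: Wf_def sum_distrib_right)
  finally show ?thesis by simp
qed

lemma det_char_matrix_P:
  assumes "0 < \<epsilon>" "\<epsilon> < \<gamma>"
  shows "det (- char_matrix (P \<epsilon>) y) = (\<Prod>j<N. y - lam \<epsilon> j)"
proof -
  have "eigenvalue (P \<epsilon>) (lam \<epsilon> j)" if "j < N" for j
  proof -
    have "f \<epsilon> j \<noteq> 0\<^sub>v N"
      using eigenpair[OF assms that] by (auto simp: cvnorm_def)
    then show ?thesis
      using eigenpair[OF assms that] unfolding eigenvalue_def eigenvector_def by (auto simp: P_eq)
  qed
  then show ?thesis
    using poly_char_poly_eq_prod[OF P_carrier card_eigenvalues[OF assms] lam_inj[OF assms]]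
      char_poly_matrix[OF P_carrier] by simp
qed

end

locale perturbed_diagonal_level = perturbed_diagonal +
  fixes c :: complex
  assumes c_nonzero: "c \<noteq> 0"
    and card_submatrix_eigenvalues:
      "card {x. principal_submatrix_eigenvalue W {j. j < N \<and> d j = c} x} = card {j. j < N \<and> d j = c}"
begin

definition B :: "nat set" where
  "B = {j. j < N \<and> d j = c}"

definition z :: "real \<Rightarrow> nat \<Rightarrow> complex" where
  "z \<epsilon> j = (lam \<epsilon> j - c) / (of_real \<epsilon> * c)"

definition block_inner :: "real \<Rightarrow> nat \<Rightarrow> nat \<Rightarrow> complex" where
  "block_inner \<epsilon> l m = (\<Sum>i\<in>B. f \<epsilon> l $ i * cnj (f \<epsilon> m $ i))"

lemma B_subset: "B \<subseteq> {..<N}"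
  by (auto simp: B_def)

lemma finite_B: "finite B"
  using B_subset finite_subset by blast

lemma sum_split_B: "(\<Sum>i<N. g i) = (\<Sum>i\<in>B. g i) + (\<Sum>i\<in>{..<N}-B. g i)"
  using B_subset by (metis add.commute finite_lessThan sum.subset_diff)

lemma Wf_on_B:
  assumes "0 < \<epsilon>" "\<epsilon> < \<gamma>" "l \<in> B" "i \<in> B"
  shows "Wf \<epsilon> l i = z \<epsilon> l * f \<epsilon> l $ i"
  using eigen_equation[of \<epsilon> l i] assms c_nonzero by (auto simp: B_def z_def field_simps)

lemma sum_outside_B_tendsto_zero:
  assumes "l \<in> B" and "\<And>i. i < N \<Longrightarrow> Bfun (\<lambda>\<epsilon>. h \<epsilon> i) (at_right 0)"
  shows "((\<lambda>\<epsilon>. \<Sum>i\<in>{..<N}-B. f \<epsilon> l $ i * h \<epsilon> i) \<longlongrightarrow> 0) (at_right 0)"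
  using assms by (intro tendsto_null_sum tendsto_mult_Bfun_zero component_tendsto_zero) (auto simp: B_def)

lemma cinner_minus_block_inner_tendsto_zero:
  assumes "l \<in> B" "m < N"
  shows "((\<lambda>\<epsilon>. cinner (f \<epsilon> l) (f \<epsilon> m) - block_inner \<epsilon> l m) \<longlongrightarrow> 0) (at_right 0)"
proof -
  have "((\<lambda>\<epsilon>. \<Sum>i\<in>{..<N}-B. f \<epsilon> l $ i * cnj (f \<epsilon> m $ i)) \<longlongrightarrow> 0) (at_right 0)"
    using assms Bfun_component by (intro sum_outside_B_tendsto_zero) (auto simp: Bfun_def)
  then show ?thesis
    by (rule Lim_transform_eventually)
      (use eventually_in_range assms B_subset in \<open>auto elim!: eventually_mono
         simp: cinner_eq_sum block_inner_def sum_split_B[of "\<lambda>i. f _ l $ i * cnj (f _ m $ i)"]\<close>)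
qed

lemma rescaled_gap_times_block_inner_tendsto_zero:
  assumes l: "l \<in> B" and m: "m \<in> B"
  shows "((\<lambda>\<epsilon>. (z \<epsilon> l - cnj (z \<epsilon> m)) * block_inner \<epsilon> l m) \<longlongrightarrow> 0) (at_right 0)"
proof -
  define R where "R \<epsilon> l m = (\<Sum>i\<in>{..<N}-B. f \<epsilon> l $ i * cnj (Wf \<epsilon> m i))" for \<epsilon> l m
  have "((\<lambda>\<epsilon>. R \<epsilon> l m) \<longlongrightarrow> 0) (at_right 0)" if "l \<in> B" "m \<in> B" for l m
    unfolding R_def using that B_subset Bfun_Wf
    by (intro sum_outside_B_tendsto_zero) (auto simp: Bfun_def)
  then have "((\<lambda>\<epsilon>. R \<epsilon> l m - cnj (R \<epsilon> m l)) \<longlongrightarrow> 0 - cnj 0) (at_right 0)"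
    using l m by (intro tendsto_intros)
  moreover have "\<forall>\<^sub>F \<epsilon> in at_right 0. R \<epsilon> l m - cnj (R \<epsilon> m l) = (z \<epsilon> l - cnj (z \<epsilon> m)) * block_inner \<epsilon> l m"
    using eventually_in_range
  proof eventually_elim
    case (elim \<epsilon>)
    then have "(\<Sum>i\<in>B. Wf \<epsilon> l i * cnj (f \<epsilon> m $ i)) = z \<epsilon> l * block_inner \<epsilon> l m"
      and "(\<Sum>i\<in>B. f \<epsilon> l $ i * cnj (Wf \<epsilon> m i)) = cnj (z \<epsilon> m) * block_inner \<epsilon> l m"
      unfolding block_inner_def sum_distrib_left using Wf_on_B l m by (auto intro!: sum.cong)
    moreover have "(\<Sum>i\<in>{..<N}-B. Wf \<epsilon> l i * cnj (f \<epsilon> m $ i)) = cnj (R \<epsilon> m l)"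
      by (simp add: R_def mult.commute)
    ultimately show ?case
      using sum_Wf_cnj_symmetric[of \<epsilon> l m] unfolding sum_split_B R_def by (simp add: algebra_simps)
  qed
  ultimately show ?thesis
    by (simp add: Lim_transform_eventually)
qed

lemma eventually_norm_z_squared_le:
  assumes j: "j \<in> B"
  shows "\<forall>\<^sub>F \<epsilon> in at_right 0. (cmod (z \<epsilon> j))\<^sup>2 \<le> 2 * card B * W_abs_sum\<^sup>2"
proof -
  have "((\<lambda>\<epsilon>. (cmod (f \<epsilon> j $ i))\<^sup>2) \<longlongrightarrow> 0) (at_right 0)" if i: "i \<in> {..<N}-B" for i
  proof -
    have "((\<lambda>\<epsilon>. f \<epsilon> j $ i) \<longlongrightarrow> 0) (at_right 0)"
      using i j by (intro component_tendsto_zero) (auto simp: B_def)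
    from tendsto_power[OF tendsto_norm[OF this], of 2] show ?thesis
      by simp
  qed
  then have "((\<lambda>\<epsilon>. \<Sum>i\<in>{..<N}-B. (cmod (f \<epsilon> j $ i))\<^sup>2) \<longlongrightarrow> 0) (at_right 0)"
    by (rule tendsto_null_sum)
  then have "\<forall>\<^sub>F \<epsilon> in at_right 0. (\<Sum>i\<in>{..<N}-B. (cmod (f \<epsilon> j $ i))\<^sup>2) < 1/2"
    by (rule order_tendstoD) simp
  then show ?thesis
    using eventually_in_range
  proof eventually_elim
    case (elim \<epsilon>)
    then have "1/2 \<le> (\<Sum>i\<in>B. (cmod (f \<epsilon> j $ i))\<^sup>2)"
      using sum_norm_squares[of \<epsilon> j] sum_split_B[of "\<lambda>i. (cmod (f \<epsilon> j $ i))\<^sup>2"] j B_subset by auto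
    then have "(cmod (z \<epsilon> j))\<^sup>2 * (1/2) \<le> (cmod (z \<epsilon> j))\<^sup>2 * (\<Sum>i\<in>B. (cmod (f \<epsilon> j $ i))\<^sup>2)"
      by (intro mult_left_mono) auto
    also have "\<dots> = (\<Sum>i\<in>B. (cmod (z \<epsilon> j * f \<epsilon> j $ i))\<^sup>2)"
      by (simp add: norm_mult power_mult_distrib sum_distrib_left)
    also have "\<dots> \<le> (\<Sum>i\<in>B. W_abs_sum\<^sup>2)"
    proof (intro sum_mono power_mono)
      fix i assume "i \<in> B"
      then show "cmod (z \<epsilon> j * f \<epsilon> j $ i) \<le> W_abs_sum"
        using Wf_on_B[of \<epsilon> j i] norm_Wf_le[of \<epsilon> j i] elim j B_subset by auto
    qed auto
    finally show ?case
      by simp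
  qed
qed

(* Z I - P(eps) for Z = c (1 + eps x), with its rows in B divided by eps, so that it extends
   continuously to eps = 0. *)
definition rescaled_char_mat :: "real \<Rightarrow> real \<Rightarrow> complex mat" where
  "rescaled_char_mat x \<epsilon> = mat N N (\<lambda>(i,j). if i \<in> B
      then c * (of_real x * (if i = j then 1 else 0) - of_real (W i j))
      else c * (1 + of_real \<epsilon> * of_real x) * (if i = j then 1 else 0)
        - d i * ((if i = j then 1 else 0) + of_real \<epsilon> * of_real (W i j)))"

lemma rescaled_char_mat_carrier: "rescaled_char_mat x \<epsilon> \<in> carrier_mat N N"
  by (simp add: rescaled_char_mat_def)

lemma det_rescaled_char_mat:
  assumes \<epsilon>: "0 < \<epsilon>" "\<epsilon> < \<gamma>"
  shows "det (rescaled_char_mat x \<epsilon>)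
       = c ^ card B * (\<Prod>j\<in>B. of_real x - z \<epsilon> j) * (\<Prod>j\<in>{..<N}-B. c * (1 + of_real \<epsilon> * of_real x) - lam \<epsilon> j)"
proof -
  define Z where "Z = c * (1 + of_real \<epsilon> * of_real x)"
  have "det (- char_matrix (P \<epsilon>) Z) = (\<Prod>i<N. if i \<in> B then of_real \<epsilon> else 1) * det (rescaled_char_mat x \<epsilon>)"
  proof (rule det_scale_rows)
    fix i j assume "i < N" "j < N"
    then show "(- char_matrix (P \<epsilon>) Z) $$ (i, j) = (if i \<in> B then of_real \<epsilon> else 1) * rescaled_char_mat x \<epsilon> $$ (i, j)"
      using P_carrier by (auto simp: char_matrix_def rescaled_char_mat_def P_eq Z_def B_def algebra_simps)
  qed (use P_carrier rescaled_char_mat_carrier in auto)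
  also have "(\<Prod>i<N. if i \<in> B then (of_real \<epsilon> :: complex) else 1) = of_real \<epsilon> ^ card B"
    using B_subset by (simp add: prod.If_cases Int_absorb1)
  finally have "of_real \<epsilon> ^ card B * det (rescaled_char_mat x \<epsilon>) = (\<Prod>j<N. Z - lam \<epsilon> j)"
    using det_char_matrix_P[OF \<epsilon>] by simp
  also have "\<dots> = (\<Prod>j\<in>B. of_real \<epsilon> * c * (of_real x - z \<epsilon> j)) * (\<Prod>j\<in>{..<N}-B. Z - lam \<epsilon> j)"
    using B_subset \<epsilon> c_nonzero
    by (subst prod.subset_diff[of B], auto intro!: prod.cong simp: Z_def z_def field_simps)
  also have "\<dots> = of_real \<epsilon> ^ card B * (c ^ card B * (\<Prod>j\<in>B. of_real x - z \<epsilon> j) * (\<Prod>j\<in>{..<N}-B. Z - lam \<epsilon> j))"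
    by (simp add: prod.distrib power_mult_distrib)
  finally show ?thesis
    using \<epsilon> by (simp add: Z_def)
qed

lemma det_rescaled_char_mat_0:
  assumes "principal_submatrix_eigenvalue W B x"
  shows "det (rescaled_char_mat x 0) = 0"
proof -
  obtain v i0 where i0: "i0 \<in> B" "v i0 \<noteq> 0"
    and ev: "\<And>i. i \<in> B \<Longrightarrow> (\<Sum>j\<in>B. W i j * v j) = x * v i"
    using assms unfolding principal_submatrix_eigenvalue_def by blast
  define w where "w j = (if j \<in> B then complex_of_real (v j) else 0)" for j
  let ?M = "rescaled_char_mat x 0"
  have "vec N w \<noteq> 0\<^sub>v N"
    using i0 B_subset by (auto simp: w_def dest!: arg_cong[of _ _ "\<lambda>u. u $ i0"])
  moreover have "(\<Sum>j<N. ?M $$ (i,j) * w j) = 0" if i: "i < N" for i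
  proof (cases "i \<in> B")
    case True
    have "(\<Sum>j<N. ?M $$ (i,j) * w j) = (\<Sum>j<N. (if j = i then c * of_real x * w j else 0) - c * (of_real (W i j) * w j))"
      using i True by (intro sum.cong) (auto simp: rescaled_char_mat_def algebra_simps)
    also have "\<dots> = c * of_real x * w i - c * (\<Sum>j<N. of_real (W i j) * w j)"
      using i by (simp add: sum_subtractf sum_distrib_left)
    also have "(\<Sum>j<N. of_real (W i j) * w j) = of_real (\<Sum>j\<in>B. W i j * v j)"
      using B_subset by (subst sum.mono_neutral_cong_right[of "{..<N}" B]) (auto simp: w_def)
    finally show ?thesis
      using ev[OF True] True by (simp add: w_def)
  next
    case False
    then show ?thesis
      using i by (intro sum.neutral) (auto simp: rescaled_char_mat_def w_def)
  qed
  then have "?M *\<^sub>v vec N w = 0\<^sub>v N"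
    using rescaled_char_mat_carrier[of x 0]
    by (intro eq_vecI) (auto simp: scalar_prod_def atLeast0LessThan)
  ultimately show ?thesis
    unfolding det_0_iff_vec_prod_zero[OF rescaled_char_mat_carrier] by (intro exI[of _ "vec N w"]) simp
qed

lemma prod_B_tendsto_zero:
  assumes "principal_submatrix_eigenvalue W B x"
  shows "((\<lambda>\<epsilon>. \<Prod>j\<in>B. of_real x - z \<epsilon> j) \<longlongrightarrow> 0) (at_right 0)"
proof -
  define R where "R \<epsilon> = c ^ card B * (\<Prod>j\<in>{..<N}-B. c * (1 + of_real \<epsilon> * of_real x) - lam \<epsilon> j)"
    for \<epsilon> :: real
  have R: "(R \<longlongrightarrow> c ^ card B * (\<Prod>j\<in>{..<N}-B. c - d j)) (at_right 0)"
    unfolding R_def by (auto intro!: tendsto_eq_intros lam_tendsto)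
  have R0: "c ^ card B * (\<Prod>j\<in>{..<N}-B. c - d j) \<noteq> 0"
    using c_nonzero by (auto simp: B_def)
  have "((\<lambda>\<epsilon>. det (rescaled_char_mat x \<epsilon>)) \<longlongrightarrow> det (rescaled_char_mat x 0)) (at_right 0)"
    by (rule tendsto_det) (auto simp: rescaled_char_mat_def intro!: tendsto_eq_intros)
  then have "((\<lambda>\<epsilon>. det (rescaled_char_mat x \<epsilon>) / R \<epsilon>) \<longlongrightarrow> 0 / (c ^ card B * (\<Prod>j\<in>{..<N}-B. c - d j))) (at_right 0)"
    using det_rescaled_char_mat_0[OF assms] by (intro tendsto_divide R R0) auto
  moreover have "\<forall>\<^sub>F \<epsilon> in at_right 0. det (rescaled_char_mat x \<epsilon>) / R \<epsilon> = (\<Prod>j\<in>B. of_real x - z \<epsilon> j)"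
    using eventually_in_range tendsto_imp_eventually_ne[OF R R0]
    by eventually_elim (simp add: det_rescaled_char_mat R_def)
  ultimately show ?thesis
    by (simp add: Lim_transform_eventually)
qed

lemma cluster_point_enumerates_eigenvalues:
  assumes e: "filterlim e (at_right 0) sequentially"
    and \<nu>: "\<And>j. j \<in> B \<Longrightarrow> (\<lambda>n. z (e n) j) \<longlonglongrightarrow> \<nu> j"
  shows "inj_on \<nu> B" and "\<nu> ` B \<subseteq> \<real>"
proof -
  let ?E = "{x. principal_submatrix_eigenvalue W B x}"
  have sub: "of_real ` ?E \<subseteq> \<nu> ` B"
  proof
    fix y :: complex assume "y \<in> of_real ` ?E"
    then obtain x where x: "principal_submatrix_eigenvalue W B x" and y: "y = of_real x"
      by auto
    have "(\<lambda>n. \<Prod>j\<in>B. of_real x - z (e n) j) \<longlonglongrightarrow> 0"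
      using filterlim_compose[OF prod_B_tendsto_zero[OF x] e] by simp
    moreover have "(\<lambda>n. \<Prod>j\<in>B. of_real x - z (e n) j) \<longlonglongrightarrow> (\<Prod>j\<in>B. of_real x - \<nu> j)"
      by (intro tendsto_intros \<nu>)
    ultimately have "(\<Prod>j\<in>B. of_real x - \<nu> j) = 0"
      using LIMSEQ_unique by metis
    then show "y \<in> \<nu> ` B"
      using finite_B y by auto
  qed
  have card_E: "card (of_real ` ?E :: complex set) = card B"
    using card_submatrix_eigenvalues by (simp add: card_image inj_on_def B_def)
  have "card (\<nu> ` B) \<le> card B"
    using finite_B by (rule card_image_le)
  then have eq: "of_real ` ?E = \<nu> ` B"
    using sub card_E card_mono[OF finite_imageI[OF finite_B] sub] finite_B
    by (intro card_subset_eq) auto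
  then show "inj_on \<nu> B"
    using card_E finite_B by (intro eq_card_imp_inj_on) auto
  show "\<nu> ` B \<subseteq> \<real>"
    unfolding eq[symmetric] by auto
qed

lemma eventually_rescaled_gap_ge:
  assumes l: "l \<in> B" and m: "m \<in> B" and "l \<noteq> m"
  shows "\<exists>\<delta>>0. \<forall>\<^sub>F \<epsilon> in at_right 0. \<delta> \<le> cmod (z \<epsilon> l - cnj (z \<epsilon> m))"
proof (rule ccontr)
  define K where "K = 2 * card B * W_abs_sum\<^sup>2"
  let ?gap = "\<lambda>\<epsilon>. cmod (z \<epsilon> l - cnj (z \<epsilon> m))"
  assume not_away: "\<not> ?thesis"
  have bound: "\<forall>\<^sub>F \<epsilon> in at_right 0. \<forall>j\<in>B. (cmod (z \<epsilon> j))\<^sup>2 \<le> K"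
    using finite_B eventually_norm_z_squared_le unfolding K_def by (intro eventually_ball_finite) auto
  obtain e where e: "filterlim e (at_right 0) sequentially"
    and gap_e: "(\<lambda>n. ?gap (e n)) \<longlonglongrightarrow> 0" and bound_e: "\<And>n. \<forall>j\<in>B. (cmod (z (e n) j))\<^sup>2 \<le> K"
    using null_sequence_if_not_bounded_away[OF not_away norm_ge_zero bound] by blast
  have "bounded (range (\<lambda>n. z (e n) j))" if j: "j \<in> B" for j
    unfolding bounded_iff
  proof (intro exI ballI)
    fix y assume "y \<in> range (\<lambda>n. z (e n) j)"
    then have "(norm y)\<^sup>2 \<le> K"
      using bound_e j by auto
    then show "norm y \<le> sqrt K"
      by (rule real_le_rsqrt)
  qed
  then obtain r where r: "strict_mono r" and conv: "\<forall>j\<in>B. \<exists>a. (\<lambda>n. z (e (r n)) j) \<longlonglongrightarrow> a"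
    using bounded_family_convergent_subseq[OF finite_B, of "\<lambda>j n. z (e n) j"] by blast
  obtain \<nu> where \<nu>: "\<And>j. j \<in> B \<Longrightarrow> (\<lambda>n. z (e (r n)) j) \<longlonglongrightarrow> \<nu> j"
    using bchoice[OF conv] by blast
  have "filterlim (\<lambda>n. e (r n)) (at_right 0) sequentially"
    using filterlim_compose[OF e filterlim_subseq[OF r]] .
  then have inj: "inj_on \<nu> B" and real: "\<nu> ` B \<subseteq> \<real>"
    using cluster_point_enumerates_eigenvalues \<nu> by blast+
  have "(\<lambda>n. ?gap (e (r n))) \<longlonglongrightarrow> cmod (\<nu> l - cnj (\<nu> m))"
    by (intro tendsto_intros \<nu> l m)
  moreover have "(\<lambda>n. ?gap (e (r n))) \<longlonglongrightarrow> 0"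
    using LIMSEQ_subseq_LIMSEQ[OF gap_e r] by (simp add: o_def)
  ultimately have "\<nu> l = cnj (\<nu> m)"
    using LIMSEQ_unique by fastforce
  moreover have "cnj (\<nu> m) = \<nu> m"
    using real m Reals_cnj_iff by blast
  ultimately show False
    using inj_on_contraD[OF inj \<open>l \<noteq> m\<close> l m] by simp
qed

lemma cinner_tendsto_zero_same_limit:
  assumes l: "l \<in> B" and m: "m \<in> B" and "l \<noteq> m"
  shows "((\<lambda>\<epsilon>. cinner (f \<epsilon> l) (f \<epsilon> m)) \<longlongrightarrow> 0) (at_right 0)"
proof -
  obtain \<delta> where \<delta>: "\<delta> > 0" and gap: "\<forall>\<^sub>F \<epsilon> in at_right 0. \<delta> \<le> cmod (z \<epsilon> l - cnj (z \<epsilon> m))"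
    using eventually_rescaled_gap_ge[OF assms] by blast
  have "((\<lambda>\<epsilon>. cmod ((z \<epsilon> l - cnj (z \<epsilon> m)) * block_inner \<epsilon> l m) / \<delta>) \<longlongrightarrow> 0 / \<delta>) (at_right 0)"
    by (intro tendsto_intros tendsto_norm_zero rescaled_gap_times_block_inner_tendsto_zero l m)
      (use \<delta> in auto)
  moreover have "\<forall>\<^sub>F \<epsilon> in at_right 0. cmod (block_inner \<epsilon> l m) \<le> cmod ((z \<epsilon> l - cnj (z \<epsilon> m)) * block_inner \<epsilon> l m) / \<delta>"
    using gap
  proof eventually_elim
    case (elim \<epsilon>)
    then have "\<delta> * cmod (block_inner \<epsilon> l m) \<le> cmod (z \<epsilon> l - cnj (z \<epsilon> m)) * cmod (block_inner \<epsilon> l m)"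
      by (intro mult_right_mono) auto
    then show ?case
      using \<delta> by (simp add: norm_mult pos_le_divide_eq mult.commute)
  qed
  ultimately have "((\<lambda>\<epsilon>. block_inner \<epsilon> l m) \<longlongrightarrow> 0) (at_right 0)"
    by (auto intro: Lim_null_comparison)
  then have "((\<lambda>\<epsilon>. (cinner (f \<epsilon> l) (f \<epsilon> m) - block_inner \<epsilon> l m) + block_inner \<epsilon> l m) \<longlongrightarrow> 0 + 0) (at_right 0)"
    using m B_subset by (intro tendsto_add cinner_minus_block_inner_tendsto_zero l) auto
  then show ?thesis
    by simp
qed

end

lemma (in perturbed_diagonal) cinner_tendsto_zero:
  assumes l: "l < N" and m: "m < N" and "l \<noteq> m"
    and d_nonzero: "\<And>i. i < N \<Longrightarrow> d i \<noteq> 0"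
    and level_spectrum: "\<And>i. i < N \<Longrightarrow>
      card {x. principal_submatrix_eigenvalue W {j. j < N \<and> d j = d i} x} = card {j. j < N \<and> d j = d i}"
  shows "((\<lambda>\<epsilon>. cinner (f \<epsilon> l) (f \<epsilon> m)) \<longlongrightarrow> 0) (at_right 0)"
proof (cases "d l = d m")
  case False
  with l m show ?thesis
    by (rule cinner_tendsto_zero_distinct_limits)
next
  case True
  interpret perturbed_diagonal_level N d W P \<gamma> f lam "d l"
    using d_nonzero level_spectrum l
    by (intro perturbed_diagonal_level.intro perturbed_diagonal_axioms perturbed_diagonal_level_axioms.intro)
  have "l \<in> B" and "m \<in> B"
    unfolding B_def using l m True by auto
  then show ?thesis
    using \<open>l \<noteq> m\<close> by (rule cinner_tendsto_zero_same_limit)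
qed

theorem lemma4p4:
  fixes L :: "nat list" and Wd :: "real mat" and k :: nat and \<beta> :: "nat \<Rightarrow> real"
    and \<gamma> :: real and f :: "real \<Rightarrow> nat \<Rightarrow> complex vec" and lam :: "real \<Rightarrow> nat \<Rightarrow> complex"
  defines "N \<equiv> sum_list L" and "S \<equiv> length L"
  defines "P \<equiv> (\<lambda>\<epsilon>::real. Dmat k \<beta> L * (1\<^sub>m N + complex_of_real \<epsilon> \<cdot>\<^sub>m map_mat complex_of_real Wd))"
  assumes "1 < S" and "S \<le> N"
    and "bw_vector L"
    and "L_admissible L Wd"
    and "0 < k"
    and "\<beta> \<in> Gamma S"
    and "0 < \<gamma>"
    and "\<And>\<epsilon>. 0 < \<epsilon> \<Longrightarrow> \<epsilon> < \<gamma> \<Longrightarrow> card {x. eigenvalue (P \<epsilon>) x} = N"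
    and "\<And>\<epsilon> l. 0 < \<epsilon> \<Longrightarrow> \<epsilon> < \<gamma> \<Longrightarrow> l < N \<Longrightarrow>
           f \<epsilon> l \<in> carrier_vec N \<and> cvnorm (f \<epsilon> l) = 1 \<and> P \<epsilon> *\<^sub>v f \<epsilon> l = lam \<epsilon> l \<cdot>\<^sub>v f \<epsilon> l"
    and "\<And>\<epsilon>. 0 < \<epsilon> \<Longrightarrow> \<epsilon> < \<gamma> \<Longrightarrow> inj_on (lam \<epsilon>) {..<N}"
    and "\<And>l s. s < S \<Longrightarrow> l \<in> block L s \<Longrightarrow>
           ((\<lambda>\<epsilon>. lam \<epsilon> l) \<longlongrightarrow> cis (- 2 * pi * real k * \<beta> s)) (at_right 0)"
  shows "\<forall>l<N. \<forall>m<N. l \<noteq> m \<longrightarrow> ((\<lambda>\<epsilon>. cinner (f \<epsilon> l) (f \<epsilon> m)) \<longlongrightarrow> 0) (at_right 0)"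
proof (intro allI impI)
  fix l m assume lm: "l < N" "m < N" "l \<noteq> m"
  define d where "d i = Dmat k \<beta> L $$ (i,i)" for i
  define W where "W i j = Wd $$ (i,j)" for i j
  have Wd: "Wd \<in> carrier_mat N N"
    using assms(7) by (simp add: L_admissible_def Let_def N_def)
  interpret perturbed_diagonal N d W P \<gamma> f lam
  proof
    show "P \<epsilon> = mat N N (\<lambda>(i,j). d i * ((if i = j then 1 else 0) + of_real \<epsilon> * of_real (W i j)))" for \<epsilon>
      using Dmat_mult_perturbation Wd unfolding P_def N_def d_def W_def by blast
    show "W i j = W j i" if "i < N" "j < N" for i j
      using L_admissible_symmetric[OF assms(7)] that unfolding W_def N_def by blast
    show "((\<lambda>\<epsilon>. lam \<epsilon> j) \<longlongrightarrow> d j) (at_right 0)" if "j < N" for j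
      using block_exists[of j L] that assms(14) Dmat_diag_entry unfolding d_def N_def S_def by metis
  qed (use assms(10-13) in auto)
  show "((\<lambda>\<epsilon>. cinner (f \<epsilon> l) (f \<epsilon> m)) \<longlongrightarrow> 0) (at_right 0)"
    using lm
  proof (rule cinner_tendsto_zero)
    fix i assume "i < N"
    then obtain s where s: "s < length L" "i \<in> block L s"
      using block_exists unfolding N_def by blast
    then show "d i \<noteq> 0"
      by (simp add: d_def Dmat_diag_entry)
    have "{j. j < N \<and> d j = d i} = block L s"
      using Dmat_level_set[OF _ assms(8) s] assms(9) unfolding N_def S_def d_def by blast
    then show "card {x. principal_submatrix_eigenvalue W {j. j < N \<and> d j = d i} x} = card {j. j < N \<and> d j = d i}"
      using L_admissible_block_spectrum[OF assms(7) s(1)] by (simp add: W_def[abs_def])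
  qed
qed

end
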